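(* Let $T>0$, $C_1>0$, and let $H:(0,1)^n\times\mathbb S(n)\to\mathbb R^n$, $B:(0,1)^n\times\mathbb S(n)\to\mathbb S(n)$ be $C^1$ with $(B(\mu,p),p)\ge(H(\mu,p),\mu)-C_1$ and $H_i(\mu,p)\ge-C_1$ for all $(\mu,p)\in(0,1)^n\times\mathbb S(n)$ and all $i$; let $g:[0,1]^n\to\mathbb R^n$. Let $\lambda\in[0,1]$, $t\in[0,T)$, $\mu\in\mathcal P_0(\mathbb G)$, and let $(\phi,\rho):[t,T]\to\mathbb R^n\times(0,1)^n$ be a classical solution of $$\dot\phi=H(\rho,\lambda\nabla_{\mathbb G}\phi)-\Delta_{\mathbb G}\phi,\quad\dot\rho=\nabla_{\mathbb G}\cdot B(\rho,\lambda\nabla_{\mathbb G}\phi)+\Delta_{\mathbb G}\rho\ \text{ on }(t,T),\quad\phi(T)=g(\rho(T)),\ \rho(t)=\mu.$$ Then $\lambda(\phi(T),\rho(T))\le\lambda(\phi(t),\mu)+2C_1(T-t)$.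
   Context: $\mathbb G$: finite connected simple undirected graph on $\{1,\dots,n\}$ with symmetric edge weights $\omega_{ij}>0$ iff $(i,j)\in\mathbb E$. $\mathbb S(n)$: skew-symmetric matrices with $(m,\tilde m)=\frac12\sum_{(i,j)\in\mathbb E}m^{ij}\tilde m^{ij}$; $(\cdot,\cdot)$ on $\mathbb R^n$ is Euclidean. $(\nabla_{\mathbb G}u)^{ij}=\sqrt{\omega_{ij}}(u^i-u^j)$, $(\nabla_{\mathbb G}\cdot m)^i=\sum_{j\ne i}\sqrt{\omega_{ij}}m^{ji}$, $(\Delta_{\mathbb G}u)^i=\sum_j\omega_{ij}(u^j-u^i)$. $\mathcal P_0(\mathbb G)$: probability vectors with positive entries. Classical solution: a $C^1$ pair satisfying the system pointwise. *)

theory Defs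
  imports "HOL-Analysis.Analysis"
begin

text \<open>Vertices of the graph are the elements of a finite type 'v (so n = CARD('v)).
  Vectors in R^n are real^'v, n x n matrices are real^'v^'v.
  The weighted graph is given by a weight function w; the edge set is
  E = {(i,j). w i j > 0}.\<close>

definition weighted_graph :: "('v::finite \<Rightarrow> 'v \<Rightarrow> real) \<Rightarrow> bool" where
  "weighted_graph w \<longleftrightarrow>
     (\<forall>i j. w i j = w j i) \<and> (\<forall>i j. w i j \<ge> 0) \<and> (\<forall>i. w i i = 0) \<and>
     (\<forall>i j. (i, j) \<in> {(a, b). w a b > 0}\<^sup>*)"

definition skew :: "real^'v^'v \<Rightarrow> bool" where
  "skew m \<longleftrightarrow> (\<forall>i j. m $ i $ j = - (m $ j $ i))"

definition Sinner :: "('v::finite \<Rightarrow> 'v \<Rightarrow> real) \<Rightarrow> real^'v^'v \<Rightarrow> real^'v^'v \<Rightarrow> real" where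
  "Sinner w m m' = (1/2) * (\<Sum>(i, j) \<in> {(a, b). w a b > 0}. m $ i $ j * m' $ i $ j)"

definition ggrad :: "('v::finite \<Rightarrow> 'v \<Rightarrow> real) \<Rightarrow> real^'v \<Rightarrow> real^'v^'v" where
  "ggrad w u = (\<chi> i j. sqrt (w i j) * (u $ i - u $ j))"

definition gdiv :: "('v::finite \<Rightarrow> 'v \<Rightarrow> real) \<Rightarrow> real^'v^'v \<Rightarrow> real^'v" where
  "gdiv w m = (\<chi> i. \<Sum>j \<in> UNIV - {i}. sqrt (w i j) * m $ j $ i)"

definition glap :: "('v::finite \<Rightarrow> 'v \<Rightarrow> real) \<Rightarrow> real^'v \<Rightarrow> real^'v" where
  "glap w u = (\<chi> i. \<Sum>j\<in>UNIV. w i j * (u $ j - u $ i))"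

definition open_cube :: "(real^'v::finite) set" where
  "open_cube = {x. \<forall>i. 0 < x $ i \<and> x $ i < 1}"

definition P0 :: "(real^'v::finite) set" where
  "P0 = {x. (\<forall>i. 0 < x $ i) \<and> (\<Sum>i\<in>UNIV. x $ i) = 1}"

definition dom_HB :: "((real^'v::finite) \<times> (real^'v^'v)) set" where
  "dom_HB = {(x, p). x \<in> open_cube \<and> skew p}"

definition C1_on :: "('a::real_normed_vector \<Rightarrow> 'b::real_normed_vector) \<Rightarrow> 'a set \<Rightarrow> bool" where
  "C1_on f U \<longleftrightarrow> (\<exists>f'. (\<forall>x\<in>U. (f has_derivative f' x) (at x within U)) \<and>
                         (\<forall>h. continuous_on U (\<lambda>x. f' x h)))"

definition classical_solution ::
  "('v::finite \<Rightarrow> 'v \<Rightarrow> real) \<Rightarrow> (real^'v \<Rightarrow> real^'v^'v \<Rightarrow> real^'v) \<Rightarrow>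
   (real^'v \<Rightarrow> real^'v^'v \<Rightarrow> real^'v^'v) \<Rightarrow> (real^'v \<Rightarrow> real^'v) \<Rightarrow> real \<Rightarrow>
   real \<Rightarrow> real \<Rightarrow> real^'v \<Rightarrow> (real \<Rightarrow> real^'v) \<Rightarrow> (real \<Rightarrow> real^'v) \<Rightarrow> bool" where
  "classical_solution w H B g lam t T mu phi rho \<longleftrightarrow>
     (\<exists>phi' rho'.
        (\<forall>s\<in>{t..T}. (phi has_vector_derivative phi' s) (at s within {t..T})) \<and>
        (\<forall>s\<in>{t..T}. (rho has_vector_derivative rho' s) (at s within {t..T})) \<and>
        continuous_on {t..T} phi' \<and> continuous_on {t..T} rho' \<and>
        (\<forall>s\<in>{t..T}. rho s \<in> open_cube) \<and>
        (\<forall>s\<in>{t<..<T}.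
           phi' s = H (rho s) (lam *\<^sub>R ggrad w (phi s)) - glap w (phi s) \<and>
           rho' s = gdiv w (B (rho s) (lam *\<^sub>R ggrad w (phi s))) + glap w (rho s))) \<and>
     phi T = g (rho T) \<and> rho t = mu"

end

theory Submission
  imports Defs
begin

text \<open>Along a solution, two discrete integrations by parts (the divergence is minus the adjoint
  of the gradient, the Laplacian is self-adjoint) give
  \<open>d/ds (\<phi>, \<rho>) = (H(\<rho>, p), \<rho>) - (B(\<rho>, p), \<nabla>\<phi>)\<close> with \<open>p = \<lambda> \<nabla>\<phi>\<close>.
  Multiplying by \<open>\<lambda>\<close> and using the structural inequality for \<open>(B(\<rho>, p), p)\<close> bounds the rate of
  \<open>\<lambda> (\<phi>, \<rho>)\<close> by \<open>C\<^sub>1 - (1 - \<lambda>) (H(\<rho>, p), \<rho>)\<close>. Both divergence and Laplacian conserve mass, so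
  \<open>\<rho>\<close> stays a probability vector and \<open>(H(\<rho>, p), \<rho>) \<ge> -C\<^sub>1\<close>; hence the rate is at most \<open>2 C\<^sub>1\<close>,
  and the mean value theorem integrates this bound over \<open>[t, T]\<close>.\<close>

lemma weighted_graphD:
  assumes "weighted_graph w"
  shows "w i j = w j i" and "0 \<le> w i j" and "w i i = 0"
  using assms unfolding weighted_graph_def by auto

lemma skew_scaleR:
  assumes "skew m"
  shows "skew (c *\<^sub>R m)"
  using assms unfolding skew_def by (metis scaleR_minus_right vector_scaleR_component)

lemma skew_ggrad:
  fixes w :: "'v::finite \<Rightarrow> 'v \<Rightarrow> real"
  assumes "\<And>i j. w i j = w j i"
  shows "skew (ggrad w u)"
proof -
  have "sqrt (w i j) * (u $ i - u $ j) = - (sqrt (w j i) * (u $ j - u $ i))" for i j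
    using assms[of i j] by (simp add: algebra_simps)
  then show ?thesis
    unfolding skew_def ggrad_def vec_lambda_beta by blast
qed

lemma scaled_ggrad_in_dom_HB:
  fixes w :: "'v::finite \<Rightarrow> 'v \<Rightarrow> real"
  assumes "\<And>i j. w i j = w j i" and "x \<in> open_cube"
  shows "(x, c *\<^sub>R ggrad w u) \<in> dom_HB"
  unfolding dom_HB_def using assms(2) skew_scaleR[OF skew_ggrad[of w, OF assms(1)]] by blast

lemma ggrad_1: "ggrad w 1 = 0"
  by (simp add: ggrad_def vec_eq_iff)

lemma glap_1: "glap w 1 = 0"
  by (simp add: glap_def vec_eq_iff)

lemma Sinner_zero_right: "Sinner w m 0 = 0"
  by (simp add: Sinner_def)

lemma Sinner_scaleR_right: "Sinner w m (c *\<^sub>R p) = c * Sinner w m p"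
  unfolding Sinner_def by (simp add: sum_distrib_left algebra_simps case_prod_beta)

lemma inner_glap_commute:
  fixes w :: "'v::finite \<Rightarrow> 'v \<Rightarrow> real"
  assumes "\<And>i j. w i j = w j i"
  shows "u \<bullet> glap w v = glap w u \<bullet> v"
proof -
  have "u \<bullet> glap w v
      = (\<Sum>i\<in>UNIV. \<Sum>j\<in>UNIV. w i j * u $ i * v $ j) - (\<Sum>i\<in>UNIV. \<Sum>j\<in>UNIV. w i j * u $ i * v $ i)"
    unfolding inner_vec_def glap_def by (simp add: sum_distrib_left sum_subtractf algebra_simps)
  also have "(\<Sum>i\<in>UNIV. \<Sum>j\<in>UNIV. w i j * u $ i * v $ j) = (\<Sum>j\<in>UNIV. \<Sum>i\<in>UNIV. w i j * u $ i * v $ j)"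
    by (rule sum.swap)
  also have "\<dots> = (\<Sum>i\<in>UNIV. \<Sum>j\<in>UNIV. w i j * u $ j * v $ i)"
    by (intro sum.cong refl) (simp add: assms)
  also have "(\<Sum>i\<in>UNIV. \<Sum>j\<in>UNIV. w i j * u $ j * v $ i) - (\<Sum>i\<in>UNIV. \<Sum>j\<in>UNIV. w i j * u $ i * v $ i)
      = glap w u \<bullet> v"
    unfolding inner_vec_def glap_def
    by (simp add: sum_distrib_left sum_distrib_right sum_subtractf algebra_simps)
  finally show ?thesis .
qed

lemma glap_inner_1:
  fixes w :: "'v::finite \<Rightarrow> 'v \<Rightarrow> real"
  assumes "\<And>i j. w i j = w j i"
  shows "glap w u \<bullet> 1 = 0"
  using inner_glap_commute[OF assms, where u = u and v = 1] by (simp add: glap_1)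

lemma inner_gdiv:
  fixes w :: "'v::finite \<Rightarrow> 'v \<Rightarrow> real"
  assumes "weighted_graph w" and "skew m"
  shows "u \<bullet> gdiv w m = - Sinner w m (ggrad w u)"
proof -
  note graph = weighted_graphD[OF assms(1)]
  have m_skew: "m $ j $ i = - m $ i $ j" for i j
    using assms(2) unfolding skew_def by blast
  define X where "X = (\<Sum>i\<in>UNIV. \<Sum>j\<in>UNIV. m $ i $ j * sqrt (w i j) * u $ i)"
  have flip: "m $ j $ i * sqrt (w i j) * c = - (m $ i $ j * sqrt (w i j) * c)" for i j c
    by (simp add: m_skew[of i j])
  have "u \<bullet> gdiv w m = (\<Sum>i\<in>UNIV. \<Sum>j\<in>UNIV. m $ j $ i * sqrt (w i j) * u $ i)"
    unfolding inner_vec_def gdiv_def by (simp add: sum_diff1 graph(3) sum_distrib_left algebra_simps)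
  also have "\<dots> = (\<Sum>i\<in>UNIV. \<Sum>j\<in>UNIV. - (m $ i $ j * sqrt (w i j) * u $ i))"
    by (simp only: flip)
  finally have lhs: "u \<bullet> gdiv w m = - X"
    unfolding X_def by (simp add: sum_negf)
  have "Sinner w m (ggrad w u)
      = (1/2) * (\<Sum>(i, j) \<in> {(a, b). 0 < w a b}. m $ i $ j * sqrt (w i j) * (u $ i - u $ j))"
    unfolding Sinner_def ggrad_def by (simp add: mult.assoc)
  also have "\<dots> = (1/2) * (\<Sum>(i, j) \<in> UNIV \<times> UNIV. m $ i $ j * sqrt (w i j) * (u $ i - u $ j))"
    using graph(2)
    by (intro arg_cong[where f = "(*) (1/2)"] sum.mono_neutral_left) (auto simp: less_le)
  also have "\<dots> = (1/2) * (X - (\<Sum>i\<in>UNIV. \<Sum>j\<in>UNIV. m $ i $ j * sqrt (w i j) * u $ j))"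
    unfolding X_def sum.cartesian_product[symmetric]
    by (simp only: sum_subtractf[symmetric]) (simp add: algebra_simps)
  also have "(\<Sum>i\<in>UNIV. \<Sum>j\<in>UNIV. m $ i $ j * sqrt (w i j) * u $ j)
      = (\<Sum>j\<in>UNIV. \<Sum>i\<in>UNIV. m $ i $ j * sqrt (w i j) * u $ j)"
    by (rule sum.swap)
  also have "\<dots> = - X"
    unfolding X_def sum_negf[symmetric] by (intro sum.cong refl) (metis flip graph(1))
  finally show ?thesis
    using lhs by simp
qed

lemma gdiv_inner_1:
  assumes "weighted_graph w" and "skew m"
  shows "gdiv w m \<bullet> 1 = 0"
  using inner_gdiv[OF assms, of 1] by (simp add: inner_commute ggrad_1 Sinner_zero_right)

lemma inner_probability_ge:
  fixes h r :: "real^'n"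
  assumes "\<And>i. c \<le> h $ i" and "\<And>i. 0 \<le> r $ i" and "(\<Sum>i\<in>UNIV. r $ i) = 1"
  shows "c \<le> h \<bullet> r"
proof -
  have "c = (\<Sum>i\<in>UNIV. c * r $ i)"
    by (simp add: sum_distrib_left[symmetric] assms(3))
  also have "\<dots> \<le> (\<Sum>i\<in>UNIV. h $ i * r $ i)"
    by (intro sum_mono mult_right_mono assms)
  finally show ?thesis
    by (simp add: inner_vec_def)
qed

lemma has_real_derivative_inner:
  assumes "(f has_vector_derivative f') (at x within s)"
    and "(g has_vector_derivative g') (at x within s)"
  shows "((\<lambda>x. f x \<bullet> g x) has_real_derivative f x \<bullet> g' + f' \<bullet> g x) (at x within s)"
  using bounded_bilinear.has_vector_derivative[OF bounded_bilinear_inner assms]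
  by (simp add: has_real_derivative_iff_has_vector_derivative)

lemma DERIV_le_imp_increment_le:
  fixes f :: "real \<Rightarrow> real"
  assumes "a \<le> b"
    and deriv: "\<And>x. x \<in> {a..b} \<Longrightarrow> (f has_real_derivative f' x) (at x within {a..b})"
    and bound: "\<And>x. a < x \<Longrightarrow> x < b \<Longrightarrow> f' x \<le> K"
  shows "f b - f a \<le> K * (b - a)"
proof -
  have "K * a - f a \<le> K * b - f b"
  proof (rule DERIV_nonneg_imp_increasing_open[OF \<open>a \<le> b\<close>, where f = "\<lambda>x. K * x - f x"])
    fix x assume "a < x" "x < b"
    then have "(f has_real_derivative f' x) (at x)"
      using deriv[of x] by (simp add: at_within_Icc_at)
    then show "\<exists>y. ((\<lambda>x. K * x - f x) has_real_derivative y) (at x) \<and> 0 \<le> y"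
      using bound[OF \<open>a < x\<close> \<open>x < b\<close>] by (intro exI conjI derivative_eq_intros) auto
  next
    show "continuous_on {a..b} (\<lambda>x. K * x - f x)"
      using DERIV_continuous_on[OF deriv] by (intro continuous_intros)
  qed
  then show ?thesis
    by (simp add: algebra_simps)
qed

lemma inner_const_if_deriv_orthogonal:
  fixes x :: "real \<Rightarrow> 'a::real_inner"
  assumes deriv: "\<And>s. s \<in> {a..b} \<Longrightarrow> (x has_vector_derivative x' s) (at s within {a..b})"
    and orth: "\<And>s. a < s \<Longrightarrow> s < b \<Longrightarrow> x' s \<bullet> v = 0"
    and "s \<in> {a..b}"
  shows "x s \<bullet> v = x a \<bullet> v"
proof -
  have deriv_inner: "((\<lambda>r. x r \<bullet> v) has_real_derivative x' r \<bullet> v) (at r within {a..s})"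
    and deriv_neg_inner: "((\<lambda>r. - (x r \<bullet> v)) has_real_derivative - (x' r \<bullet> v)) (at r within {a..s})"
    if "r \<in> {a..s}" for r
  proof -
    have "(x has_vector_derivative x' r) (at r within {a..s})"
      using deriv[of r] that \<open>s \<in> {a..b}\<close> by (auto intro: has_vector_derivative_within_subset)
    from has_real_derivative_inner[OF this has_vector_derivative_const]
    show "((\<lambda>r. x r \<bullet> v) has_real_derivative x' r \<bullet> v) (at r within {a..s})"
      by simp
    then show "((\<lambda>r. - (x r \<bullet> v)) has_real_derivative - (x' r \<bullet> v)) (at r within {a..s})"
      by (rule DERIV_minus)
  qed
  have "x s \<bullet> v - x a \<bullet> v \<le> 0 * (s - a)"
    using \<open>s \<in> {a..b}\<close> deriv_inner orth
    by (intro DERIV_le_imp_increment_le[where f' = "\<lambda>r. x' r \<bullet> v"]) auto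
  moreover have "- (x s \<bullet> v) - - (x a \<bullet> v) \<le> 0 * (s - a)"
    using \<open>s \<in> {a..b}\<close> deriv_neg_inner orth
    by (intro DERIV_le_imp_increment_le[where f' = "\<lambda>r. - (x' r \<bullet> v)"]) auto
  ultimately show ?thesis
    by linarith
qed

lemma pairing_rate_le:
  fixes w :: "'v::finite \<Rightarrow> 'v \<Rightarrow> real"
  assumes "weighted_graph w" and "skew b"
    and structural: "h \<bullet> r - C \<le> Sinner w b (lam *\<^sub>R ggrad w u)"
    and "\<And>i. - C \<le> h $ i" and "r \<in> P0"
    and "0 \<le> lam" and "lam \<le> 1" and "0 \<le> C"
  shows "lam * (u \<bullet> (gdiv w b + glap w r) + (h - glap w u) \<bullet> r) \<le> 2 * C"
proof -
  have sym: "\<And>i j. w i j = w j i"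
    using weighted_graphD(1)[OF assms(1)] .
  have "- C \<le> h \<bullet> r"
    using \<open>r \<in> P0\<close> by (intro inner_probability_ge assms(4)) (auto simp: P0_def less_imp_le)
  have "u \<bullet> (gdiv w b + glap w r) + (h - glap w u) \<bullet> r = h \<bullet> r - Sinner w b (ggrad w u)"
    using inner_gdiv[OF assms(1,2)] inner_glap_commute[of w, OF sym]
    by (simp add: inner_add_right inner_diff_left)
  then have "lam * (u \<bullet> (gdiv w b + glap w r) + (h - glap w u) \<bullet> r)
      = lam * (h \<bullet> r) - Sinner w b (lam *\<^sub>R ggrad w u)"
    by (simp add: Sinner_scaleR_right right_diff_distrib)
  also have "\<dots> \<le> C - (1 - lam) * (h \<bullet> r)"
    using structural by (simp add: algebra_simps)
  also have "\<dots> \<le> C + (1 - lam) * C"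
    using \<open>- C \<le> h \<bullet> r\<close> \<open>lam \<le> 1\<close> mult_left_mono[of "- C" "h \<bullet> r" "1 - lam"] by simp
  also have "\<dots> \<le> 2 * C"
    using \<open>0 \<le> lam\<close> \<open>0 \<le> C\<close> by (simp add: algebra_simps)
  finally show ?thesis .
qed

lemma classical_solution_in_P0:
  fixes w :: "'v::finite \<Rightarrow> 'v \<Rightarrow> real"
  assumes "weighted_graph w" and skew_B: "\<forall>(x, p) \<in> dom_HB. skew (B x p)"
    and "mu \<in> P0" and sol: "classical_solution w H B g lam t T mu phi rho"
    and "s \<in> {t..T}"
  shows "rho s \<in> P0"
proof -
  obtain rho' where
    deriv: "\<forall>s\<in>{t..T}. (rho has_vector_derivative rho' s) (at s within {t..T})" and
    cube: "\<forall>s\<in>{t..T}. rho s \<in> open_cube" and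
    eq: "\<forall>s\<in>{t<..<T}. rho' s = gdiv w (B (rho s) (lam *\<^sub>R ggrad w (phi s))) + glap w (rho s)" and
    "rho t = mu"
    using sol unfolding classical_solution_def by blast
  have sym: "\<And>i j. w i j = w j i"
    using weighted_graphD(1)[OF assms(1)] .
  have "rho' r \<bullet> 1 = 0" if "t < r" "r < T" for r
  proof -
    have "(rho r, lam *\<^sub>R ggrad w (phi r)) \<in> dom_HB"
      using cube that by (intro scaled_ggrad_in_dom_HB[of w, OF sym]) auto
    then show ?thesis
      using eq that skew_B gdiv_inner_1[OF assms(1)] glap_inner_1[of w, OF sym]
      by (auto simp: inner_add_left)
  qed
  then have "rho s \<bullet> 1 = mu \<bullet> 1"
    using inner_const_if_deriv_orthogonal[of t T rho rho' 1 s] deriv \<open>s \<in> {t..T}\<close> \<open>rho t = mu\<close>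
    by auto
  then show ?thesis
    using \<open>mu \<in> P0\<close> cube \<open>s \<in> {t..T}\<close> by (simp add: P0_def open_cube_def inner_vec_def)
qed

theorem lemma3p1:
  fixes w :: "'v::finite \<Rightarrow> 'v \<Rightarrow> real"
    and H :: "real^'v \<Rightarrow> real^'v^'v \<Rightarrow> real^'v"
    and B :: "real^'v \<Rightarrow> real^'v^'v \<Rightarrow> real^'v^'v"
    and g :: "real^'v \<Rightarrow> real^'v"
    and T C1 lam t :: real
    and mu :: "real^'v"
    and phi rho :: "real \<Rightarrow> real^'v"
  assumes "weighted_graph w"
    and "T > 0" and "C1 > 0"
    and "C1_on (\<lambda>(x, p). H x p) dom_HB"
    and "C1_on (\<lambda>(x, p). B x p) dom_HB"
    and "\<forall>(x, p) \<in> dom_HB. skew (B x p)"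
    and "\<forall>(x, p) \<in> dom_HB. Sinner w (B x p) p \<ge> H x p \<bullet> x - C1"
    and "\<forall>(x, p) \<in> dom_HB. \<forall>i. H x p $ i \<ge> - C1"
    and "0 \<le> lam" and "lam \<le> 1"
    and "0 \<le> t" and "t < T"
    and "mu \<in> P0"
    and "classical_solution w H B g lam t T mu phi rho"
  shows "lam * (phi T \<bullet> rho T) \<le> lam * (phi t \<bullet> mu) + 2 * C1 * (T - t)"
proof -
  obtain phi' rho' where
    dphi: "\<forall>s\<in>{t..T}. (phi has_vector_derivative phi' s) (at s within {t..T})" and
    drho: "\<forall>s\<in>{t..T}. (rho has_vector_derivative rho' s) (at s within {t..T})" and
    cube: "\<forall>s\<in>{t..T}. rho s \<in> open_cube" and
    eqs: "\<forall>s\<in>{t<..<T}.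
           phi' s = H (rho s) (lam *\<^sub>R ggrad w (phi s)) - glap w (phi s) \<and>
           rho' s = gdiv w (B (rho s) (lam *\<^sub>R ggrad w (phi s))) + glap w (rho s)" and
    "rho t = mu"
    using assms(14) unfolding classical_solution_def by blast
  have sym: "\<And>i j. w i j = w j i"
    using weighted_graphD(1)[OF assms(1)] .
  have deriv: "((\<lambda>s. lam * (phi s \<bullet> rho s)) has_real_derivative lam * (phi s \<bullet> rho' s + phi' s \<bullet> rho s))
      (at s within {t..T})" if "s \<in> {t..T}" for s
    using dphi drho that by (intro DERIV_cmult has_real_derivative_inner) auto
  have rate: "lam * (phi s \<bullet> rho' s + phi' s \<bullet> rho s) \<le> 2 * C1" if "t < s" "s < T" for s
  proof -
    define p where "p = lam *\<^sub>R ggrad w (phi s)"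
    have "(rho s, p) \<in> dom_HB"
      unfolding p_def using cube that by (intro scaled_ggrad_in_dom_HB[of w, OF sym]) auto
    moreover have "rho s \<in> P0"
      using classical_solution_in_P0[OF assms(1,6,13,14)] that by simp
    ultimately have "lam * (phi s \<bullet> (gdiv w (B (rho s) p) + glap w (rho s))
        + (H (rho s) p - glap w (phi s)) \<bullet> rho s) \<le> 2 * C1"
      using assms(3,6-10) unfolding p_def by (intro pairing_rate_le[OF assms(1)]) auto
    then show ?thesis
      using eqs that unfolding p_def by simp
  qed
  have "lam * (phi T \<bullet> rho T) - lam * (phi t \<bullet> rho t) \<le> 2 * C1 * (T - t)"
    using \<open>t < T\<close> deriv rate by (intro DERIV_le_imp_increment_le) auto
  then show ?thesis
    using \<open>rho t = mu\<close> by simp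
qed

end
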